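(* For every $3\le n\le N$, as identities of rational functions of $x$, $$x\nabla\mathbb K_n(x)=\mathscr E_{1,n}(x)K_n(x)+\mathscr F_{1,n}(x)K_{n-1}(x),\qquad x\nabla\mathbb K_{n-1}(x)=\mathscr E_{2,n}(x)K_n(x)+\mathscr F_{2,n}(x)K_{n-1}(x).$$
   Context: Fix an integer $N\ge 1$ and $0<p<1$. Notation: $(a)_0=1$, $(a)_k=a(a+1)\cdots(a+k-1)$ (Pochhammer symbol); $[z]_0=1$, $[z]_k=z(z-1)\cdots(z-k+1)$ (falling factorial). For a function $f$, $\Delta f(x)=f(x+1)-f(x)$, $\nabla f(x)=f(x)-f(x-1)$, $\Delta^0$ is the identity and $\Delta^k=\Delta\circ\Delta^{k-1}$. For $0\le n\le N$ the monic Kravchuk polynomial is $K_n(x)=p^n(-N)_n\sum_{k=0}^{n}\frac{(-n)_k(-x)_k}{(-N)_k\,k!}p^{-k}$, and $K_{-1}=0$; these are monic of degree $n$ and orthogonal on $\{0,\dots,N\}$ with respect to the binomial weight $w(x)=\binom{N}{x}p^x(1-p)^{N-x}$, with $\|K_n\|^2=\sum_{x=0}^N K_n(x)^2w(x)=n!(-N)_np^n(p-1)^n$. They satisfy $xK_n=K_{n+1}+\alpha_nK_n+\beta_nK_{n-1}$ with $\alpha_n=p(N-n)+n(1-p)$, $\beta_n=np(1-p)(N-n+1)$. For $1\le n\le N+1$ and integers $i,l\ge0$, $\mathscr K_{n-1}^{(i,l)}(x,y)=\sum_{k=0}^{n-1}\frac{\Delta^iK_k(x)\,\Delta^lK_k(y)}{\|K_k\|^2}$.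 Fix $\lambda,\mu>0$ and an integer $j\ge 0$. On real polynomials define $\langle f,g\rangle_{\lambda,\mu}=\sum_{x=0}^N f(x)g(x)w(x)+\lambda\Delta^jf(0)\Delta^jg(0)+\mu\Delta^jf(N)\Delta^jg(N)$. For $0\le n\le N$, $\mathbb K_n=\mathbb K_n^{(j)}$ is the monic polynomial of degree $n$ with $\langle\mathbb K_n,q\rangle_{\lambda,\mu}=0$ for all polynomials $q$ of degree $<n$ (Kravchuk–Sobolev polynomials). For $1\le n\le N$: $\mathscr A_n(x,y)=\frac{j!}{\|K_{n-1}\|^2[x-y]_{j+1}}\sum_{k=0}^{j}\frac{\Delta^kK_{n-1}(y)}{k!}[x-y]_k$, $\mathscr B_n(x,y)=-\frac{j!}{\|K_{n-1}\|^2[x-y]_{j+1}}\sum_{k=0}^{j}\frac{\Delta^kK_{n}(y)}{k!}[x-y]_k$; $k_{00}=\mathscr K^{(j,j)}_{n-1}(0,0)$, $k_{0N}=\mathscr K^{(j,j)}_{n-1}(0,N)$, $k_{N0}=\mathscr K^{(j,j)}_{n-1}(N,0)$, $k_{NN}=\mathscr K^{(j,j)}_{n-1}(N,N)$, $d_0=\Delta^jK_n(0)$, $d_N=\Delta^jK_n(N)$, $\delta_n=(1+\lambda k_{00})(1+\mu k_{NN})-\lambda\mu k_{0N}k_{N0}$ (which is nonzero), $\Phi_1(n)=\frac{d_0(1+\mu k_{NN})-\mu k_{0N}d_N}{\delta_n}$, $\Phi_2(n)=\frac{(1+\lambda k_{00})d_N-\lambda k_{N0}d_0}{\delta_n}$;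 $\mathscr C_{1,n}(x)=1-\lambda\Phi_1(n)\mathscr A_n(x,0)-\mu\Phi_2(n)\mathscr A_n(x,N)$ and $\mathscr D_{1,n}(x)=-\lambda\Phi_1(n)\mathscr B_n(x,0)-\mu\Phi_2(n)\mathscr B_n(x,N)$. For $2\le m\le N$ define $\mathscr E_{1,m}(x)=x\nabla\mathscr C_{1,m}(x)+m\,\mathscr C_{1,m}(x-1)-\frac{(m-1)p(N-m+2)\mathscr D_{1,m}(x-1)}{\beta_{m-1}}$ and $\mathscr F_{1,m}(x)=x\nabla\mathscr D_{1,m}(x)+mp(N-m+1)\mathscr C_{1,m}(x-1)+\frac{(m-1)p(N-m+2)(x-\alpha_{m-1})\mathscr D_{1,m}(x-1)}{\beta_{m-1}}+(m-1)\mathscr D_{1,m}(x-1)$. For $3\le n\le N$ define $\mathscr E_{2,n}(x)=-\frac{\mathscr F_{1,n-1}(x)}{\beta_{n-1}}$ and $\mathscr F_{2,n}(x)=\mathscr E_{1,n-1}(x)+\mathscr E_{2,n}(x)(\alpha_{n-1}-x)$. *)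

theory Defs
  imports Complex_Main "HOL-Computational_Algebra.Polynomial"
begin

definition falling :: "real \<Rightarrow> nat \<Rightarrow> real" where
  "falling z k = (\<Prod>i<k. z - real i)"

definition fdiff :: "(real \<Rightarrow> real) \<Rightarrow> real \<Rightarrow> real" where
  "fdiff f = (\<lambda>x. f (x + 1) - f x)"

definition fdiffs :: "nat \<Rightarrow> (real \<Rightarrow> real) \<Rightarrow> real \<Rightarrow> real" where
  "fdiffs i f = (fdiff ^^ i) f"

definition bdiff :: "(real \<Rightarrow> real) \<Rightarrow> real \<Rightarrow> real" where
  "bdiff f x = f x - f (x - 1)"

definition bweight :: "nat \<Rightarrow> real \<Rightarrow> nat \<Rightarrow> real" where
  "bweight N p x = real (N choose x) * p ^ x * (1 - p) ^ (N - x)"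

text \<open>Monic Kravchuk polynomial K_n (as a function of x).\<close>
definition Kraw :: "nat \<Rightarrow> real \<Rightarrow> nat \<Rightarrow> real \<Rightarrow> real" where
  "Kraw N p n x = p ^ n * pochhammer (- real N) n *
     (\<Sum>k\<le>n. pochhammer (- real n) k * pochhammer (- x) k
        / (pochhammer (- real N) k * fact k) * (1 / p ^ k))"

definition Knorm2 :: "nat \<Rightarrow> real \<Rightarrow> nat \<Rightarrow> real" where
  "Knorm2 N p n = (\<Sum>x\<le>N. (Kraw N p n (real x))\<^sup>2 * bweight N p x)"

definition alphaK :: "nat \<Rightarrow> real \<Rightarrow> nat \<Rightarrow> real" where
  "alphaK N p n = p * (real N - real n) + real n * (1 - p)"

definition betaK :: "nat \<Rightarrow> real \<Rightarrow> nat \<Rightarrow> real" where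
  "betaK N p n = real n * p * (1 - p) * (real N - real n + 1)"

text \<open>Kernel: kern N p n i l x y = script-K_{n-1}^{(i,l)}(x,y).\<close>
definition kern :: "nat \<Rightarrow> real \<Rightarrow> nat \<Rightarrow> nat \<Rightarrow> nat \<Rightarrow> real \<Rightarrow> real \<Rightarrow> real" where
  "kern N p n i l x y = (\<Sum>k<n. fdiffs i (Kraw N p k) x * fdiffs l (Kraw N p k) y / Knorm2 N p k)"

definition sip :: "nat \<Rightarrow> real \<Rightarrow> real \<Rightarrow> real \<Rightarrow> nat \<Rightarrow> real poly \<Rightarrow> real poly \<Rightarrow> real" where
  "sip N p lam mu j f g =
     (\<Sum>x\<le>N. poly f (real x) * poly g (real x) * bweight N p x)
     + lam * fdiffs j (poly f) 0 * fdiffs j (poly g) 0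
     + mu * fdiffs j (poly f) (real N) * fdiffs j (poly g) (real N)"

definition SobK :: "nat \<Rightarrow> real \<Rightarrow> real \<Rightarrow> real \<Rightarrow> nat \<Rightarrow> nat \<Rightarrow> real poly" where
  "SobK N p lam mu j n = (THE q. degree q = n \<and> lead_coeff q = 1 \<and>
      (\<forall>r. degree r < n \<longrightarrow> sip N p lam mu j q r = 0))"

definition Acal :: "nat \<Rightarrow> real \<Rightarrow> nat \<Rightarrow> nat \<Rightarrow> real \<Rightarrow> real \<Rightarrow> real" where
  "Acal N p j n x y = fact j / (Knorm2 N p (n - 1) * falling (x - y) (j + 1)) *
     (\<Sum>k\<le>j. fdiffs k (Kraw N p (n - 1)) y / fact k * falling (x - y) k)"

definition Bcal :: "nat \<Rightarrow> real \<Rightarrow> nat \<Rightarrow> nat \<Rightarrow> real \<Rightarrow> real \<Rightarrow> real" where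
  "Bcal N p j n x y = - (fact j / (Knorm2 N p (n - 1) * falling (x - y) (j + 1)) *
     (\<Sum>k\<le>j. fdiffs k (Kraw N p n) y / fact k * falling (x - y) k))"

definition deltaS :: "nat \<Rightarrow> real \<Rightarrow> real \<Rightarrow> real \<Rightarrow> nat \<Rightarrow> nat \<Rightarrow> real" where
  "deltaS N p lam mu j n =
     (1 + lam * kern N p n j j 0 0) * (1 + mu * kern N p n j j (real N) (real N))
     - lam * mu * kern N p n j j 0 (real N) * kern N p n j j (real N) 0"

definition Phi1 :: "nat \<Rightarrow> real \<Rightarrow> real \<Rightarrow> real \<Rightarrow> nat \<Rightarrow> nat \<Rightarrow> real" where
  "Phi1 N p lam mu j n =
     (fdiffs j (Kraw N p n) 0 * (1 + mu * kern N p n j j (real N) (real N))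
      - mu * kern N p n j j 0 (real N) * fdiffs j (Kraw N p n) (real N))
     / deltaS N p lam mu j n"

definition Phi2 :: "nat \<Rightarrow> real \<Rightarrow> real \<Rightarrow> real \<Rightarrow> nat \<Rightarrow> nat \<Rightarrow> real" where
  "Phi2 N p lam mu j n =
     ((1 + lam * kern N p n j j 0 0) * fdiffs j (Kraw N p n) (real N)
      - lam * kern N p n j j (real N) 0 * fdiffs j (Kraw N p n) 0)
     / deltaS N p lam mu j n"

definition C1 :: "nat \<Rightarrow> real \<Rightarrow> real \<Rightarrow> real \<Rightarrow> nat \<Rightarrow> nat \<Rightarrow> real \<Rightarrow> real" where
  "C1 N p lam mu j n x = 1 - lam * Phi1 N p lam mu j n * Acal N p j n x 0
      - mu * Phi2 N p lam mu j n * Acal N p j n x (real N)"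

definition D1 :: "nat \<Rightarrow> real \<Rightarrow> real \<Rightarrow> real \<Rightarrow> nat \<Rightarrow> nat \<Rightarrow> real \<Rightarrow> real" where
  "D1 N p lam mu j n x = - lam * Phi1 N p lam mu j n * Bcal N p j n x 0
      - mu * Phi2 N p lam mu j n * Bcal N p j n x (real N)"

definition E1 :: "nat \<Rightarrow> real \<Rightarrow> real \<Rightarrow> real \<Rightarrow> nat \<Rightarrow> nat \<Rightarrow> real \<Rightarrow> real" where
  "E1 N p lam mu j m x = x * bdiff (C1 N p lam mu j m) x + real m * C1 N p lam mu j m (x - 1)
     - (real m - 1) * p * (real N - real m + 2) * D1 N p lam mu j m (x - 1) / betaK N p (m - 1)"

definition F1 :: "nat \<Rightarrow> real \<Rightarrow> real \<Rightarrow> real \<Rightarrow> nat \<Rightarrow> nat \<Rightarrow> real \<Rightarrow> real" where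
  "F1 N p lam mu j m x = x * bdiff (D1 N p lam mu j m) x
     + real m * p * (real N - real m + 1) * C1 N p lam mu j m (x - 1)
     + (real m - 1) * p * (real N - real m + 2) * (x - alphaK N p (m - 1)) * D1 N p lam mu j m (x - 1)
         / betaK N p (m - 1)
     + (real m - 1) * D1 N p lam mu j m (x - 1)"

definition E2 :: "nat \<Rightarrow> real \<Rightarrow> real \<Rightarrow> real \<Rightarrow> nat \<Rightarrow> nat \<Rightarrow> real \<Rightarrow> real" where
  "E2 N p lam mu j n x = - F1 N p lam mu j (n - 1) x / betaK N p (n - 1)"

definition F2 :: "nat \<Rightarrow> real \<Rightarrow> real \<Rightarrow> real \<Rightarrow> nat \<Rightarrow> nat \<Rightarrow> real \<Rightarrow> real" where
  "F2 N p lam mu j n x = E1 N p lam mu j (n - 1) x + E2 N p lam mu j n x * (alphaK N p (n - 1) - x)"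

end

theory Submission
  imports Defs "HOL-Analysis.Convex"
begin

text \<open>
  In the falling-factorial basis \<open>x\<nabla>\<close> acts diagonally, which yields the structure relation
  \<open>x\<nabla>K\<^sub>n = n K\<^sub>n + n p (N - n + 1) K\<^sub>n\<^sub>-\<^sub>1\<close>. Applied to a connection formula
  \<open>\<bbbK>\<^sub>n = C\<^sub>1\<^sub>,\<^sub>n K\<^sub>n + D\<^sub>1\<^sub>,\<^sub>n K\<^sub>n\<^sub>-\<^sub>1\<close>, with \<open>K\<^sub>n\<^sub>-\<^sub>2\<close> eliminated by the three-term recurrence,
  it gives the first identity; the second is the first one at \<open>n - 1\<close>, rewritten in \<open>K\<^sub>n, K\<^sub>n\<^sub>-\<^sub>1\<close>
  by the recurrence once more.

  For the connection formula, \<open>\<bbbK>\<^sub>n\<close> is \<open>K\<^sub>n\<close> minus multiples of the polynomials of degree \<open>< n\<close>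
  that reproduce \<open>r \<mapsto> \<Delta>\<^sup>jr(0)\<close> and \<open>r \<mapsto> \<Delta>\<^sup>jr(N)\<close> in the binomial inner product; the
  multiples solve a \<open>2 \<times> 2\<close> system whose determinant \<open>\<delta>\<^sub>n\<close> is positive by Cauchy-Schwarz, and
  uniqueness holds because the Sobolev form is definite on polynomials of degree \<open>\<le> N\<close>. Differencing
  the Christoffel-Darboux formula in its second variable and summing the resulting Newton series
  writes these kernels as \<open>\<A>\<^sub>n K\<^sub>n + \<B>\<^sub>n K\<^sub>n\<^sub>-\<^sub>1\<close>.
\<close>

section \<open>Falling factorials and finite differences\<close>

lemma falling_0 [simp]: "falling z 0 = 1"
  by (simp add: falling_def)

lemma falling_Suc: "falling z (Suc k) = falling z k * (z - real k)"
  by (simp add: falling_def)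

lemma falling_Suc_left: "falling z (Suc k) = z * falling (z - 1) k"
  unfolding falling_def by (subst prod.lessThan_Suc_shift) (simp add: algebra_simps)

lemma falling_add: "falling z (a + b) = falling z a * falling (z - real a) b"
  by (induction b) (simp_all add: falling_Suc algebra_simps)

lemma falling_of_nat_eq_0: "x < k \<Longrightarrow> falling (real x) k = 0"
  unfolding falling_def by (rule prod_zero) auto

lemma falling_of_nat_fact: "k \<le> x \<Longrightarrow> falling (real x) k * fact (x - k) = fact x"
proof (induction k)
  case (Suc k)
  then have "fact (x - k) = real (x - k) * fact (x - Suc k)"
    by (metis Suc_diff_Suc Suc_le_lessD fact_Suc)
  with Suc show ?case
    by (simp add: falling_Suc of_nat_diff mult.assoc)
qed simp

lemma falling_nonzero_if_not_Ints: "x \<notin> \<int> \<Longrightarrow> falling (x - real y) k \<noteq> 0"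
  unfolding falling_def by (auto simp: diff_eq_eq)

lemma pochhammer_minus_falling: "pochhammer (- x) k = (-1) ^ k * falling (x::real) k"
proof -
  have "x gchoose k = (-1) ^ k * pochhammer (- x) k / fact k"
    by (rule gbinomial_pochhammer)
  moreover have "x gchoose k = falling x k / fact k"
    by (simp add: gbinomial_prod_rev falling_def atLeast0LessThan)
  ultimately show ?thesis
    by (simp add: power_mult_distrib [symmetric])
qed

lemma pochhammer_minus_of_nat:
  "pochhammer (- real n) k = (-1) ^ k * fact k * real (n choose k)"
  using gbinomial_pochhammer [of "real n" k]
  by (simp add: binomial_gbinomial power_mult_distrib [symmetric])

lemma x_times_bdiff_falling: "x * (falling x k - falling (x - 1) k) = real k * falling x k"
proof (cases k)
  case (Suc k')
  have lower: "falling (x - 1) k = falling (x - 1) k' * (x - 1 - real k')"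
    by (simp only: Suc falling_Suc)
  have upper: "falling x k = x * falling (x - 1) k'"
    by (simp only: Suc falling_Suc_left)
  show ?thesis
    unfolding lower upper using Suc by (simp add: algebra_simps)
qed simp

lemma fdiffs_0 [simp]: "fdiffs 0 f = f"
  by (simp add: fdiffs_def)

lemma fdiffs_Suc: "fdiffs (Suc j) f y = fdiffs j f (y + 1) - fdiffs j f y"
  by (simp add: fdiffs_def fdiff_def)

lemma fdiffs_sum: "fdiffs j (\<lambda>x. \<Sum>k\<in>A. f k x) = (\<lambda>x. \<Sum>k\<in>A. fdiffs j (f k) x)"
  by (induction j) (simp_all add: fdiffs_Suc fun_eq_iff sum_subtractf)

lemma fdiffs_cmult: "fdiffs j (\<lambda>x. c * f x) = (\<lambda>x. c * fdiffs j f x)"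
  by (induction j) (simp_all add: fdiffs_Suc fun_eq_iff algebra_simps)

lemma fdiffs_diff: "fdiffs j (\<lambda>x. f x - g x) = (\<lambda>x. fdiffs j f x - fdiffs j g x)"
  by (induction j) (simp_all add: fdiffs_Suc fun_eq_iff algebra_simps)

lemma fdiffs_lincomb: "fdiffs j (\<lambda>x. \<Sum>k\<in>A. c k * f k x) = (\<lambda>x. \<Sum>k\<in>A. c k * fdiffs j (f k) x)"
  by (simp add: fdiffs_sum fdiffs_cmult)

lemma fdiffs_linear_factor:
  "fdiffs n (\<lambda>y. (x - y) * G y) y = (x - y - real n) * fdiffs n G y - real n * fdiffs (n - 1) G y"
proof (induction n arbitrary: y)
  case (Suc n)
  have "real n * (fdiffs (n - 1) G (y + 1) - fdiffs (n - 1) G y) = real n * fdiffs n G y"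
    by (cases n) (simp_all add: fdiffs_Suc)
  then show ?case
    unfolding fdiffs_Suc [of n] Suc.IH by (simp add: fdiffs_Suc algebra_simps)
qed simp

text \<open>The Newton series of \<open>y' \<mapsto> (x - y') G(y')\<close> around \<open>y\<close>, evaluated at \<open>x\<close>, telescopes.\<close>
lemma newton_series_linear_factor:
  "(\<Sum>k\<le>j. fdiffs k (\<lambda>y'. (x - y') * G y') y * falling (x - y) k / fact k)
    = falling (x - y) (Suc j) / fact j * fdiffs j G y"
proof (induction j)
  case (Suc j)
  have step: "fdiffs (Suc j) (\<lambda>y'. (x - y') * G y') y
      = (x - y - real (Suc j)) * fdiffs (Suc j) G y - real (Suc j) * fdiffs j G y"
    using fdiffs_linear_factor [of "Suc j" x G y] by simp
  have "(\<Sum>k\<le>Suc j. fdiffs k (\<lambda>y'. (x - y') * G y') y * falling (x - y) k / fact k)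
      = falling (x - y) (Suc j) / fact j * fdiffs j G y
        + fdiffs (Suc j) (\<lambda>y'. (x - y') * G y') y * falling (x - y) (Suc j) / fact (Suc j)"
    using Suc.IH by simp
  also have "\<dots> = falling (x - y) (Suc j) * (x - y - real (Suc j)) / fact (Suc j) * fdiffs (Suc j) G y"
    using fact_gt_zero [of j, where 'a = real] unfolding step fact_Suc
    by (simp add: divide_simps) (simp add: algebra_simps)
  also have "\<dots> = falling (x - y) (Suc (Suc j)) / fact (Suc j) * fdiffs (Suc j) G y"
    by (simp only: falling_Suc [of _ "Suc j"])
  finally show ?case .
qed (simp add: falling_def)

section \<open>Kravchuk polynomials in the falling-factorial basis\<close>

definition krav_coeff :: "nat \<Rightarrow> real \<Rightarrow> nat \<Rightarrow> nat \<Rightarrow> real" where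
  "krav_coeff N p n k = real (n choose k) * (- p) ^ (n - k) * falling (real N - real k) (n - k)"

text \<open>The falling-factorial expansion of \<open>K\<^sub>n\<close>. Unlike \<open>Kraw\<close> it is meaningful
  for every \<open>n\<close>, which the orthogonality argument needs.\<close>
definition krav :: "nat \<Rightarrow> real \<Rightarrow> nat \<Rightarrow> real \<Rightarrow> real" where
  "krav N p n x = (\<Sum>k\<le>n. krav_coeff N p n k * falling x k)"

lemma Kraw_eq_krav:
  assumes "p \<noteq> 0" "n \<le> N"
  shows "Kraw N p n = krav N p n"
proof
  fix x
  have "p ^ n * pochhammer (- real N) n *
          (pochhammer (- real n) k * pochhammer (- x) k / (pochhammer (- real N) k * fact k) * (1 / p ^ k))
        = krav_coeff N p n k * falling x k" if "k \<le> n" for k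
  proof -
    have nonzero: "pochhammer (- real N) k \<noteq> 0"
      using that assms(2) by (auto simp: pochhammer_eq_0_iff)
    have "pochhammer (- real N) n = pochhammer (- real N) k * pochhammer (- (real N - real k)) (n - k)"
      using pochhammer_product' [of "- real N" k "n - k"] that by simp
    also have "\<dots> = pochhammer (- real N) k * (-1) ^ (n - k) * falling (real N - real k) (n - k)"
      by (simp only: pochhammer_minus_falling mult.assoc)
    finally have split: "pochhammer (- real N) n = \<dots>" .
    have "p ^ n = p ^ k * p ^ (n - k)"
      using that by (simp add: power_add [symmetric])
    moreover have "(-1::real) ^ k * (-1) ^ k = 1"
      by (simp add: power_mult_distrib [symmetric])
    ultimately show ?thesis
      unfolding split pochhammer_minus_of_nat [of n k] pochhammer_minus_falling [of x k]
        krav_coeff_def power_minus [of p]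
      using nonzero assms(1) by (simp add: field_simps)
  qed
  then show "Kraw N p n x = krav N p n x"
    unfolding Kraw_def krav_def sum_distrib_left by (intro sum.cong) auto
qed

lemma krav_coeff_eq_0: "n < k \<Longrightarrow> krav_coeff N p n k = 0"
  by (simp add: krav_coeff_def)

lemma krav_coeff_diag [simp]: "krav_coeff N p n n = 1"
  by (simp add: krav_coeff_def)

lemma falling_tail_Suc:
  "k \<le> n \<Longrightarrow> falling (real N - real k) (Suc n - k) = falling (real N - real k) (n - k) * (real N - real n)"
  by (simp add: Suc_diff_le falling_Suc of_nat_diff)

lemma falling_tail_pred:
  assumes "0 < k" "k \<le> Suc n"
  shows "falling (real N - real (k - 1)) (Suc n - (k - 1)) = (real N - real k + 1) * falling (real N - real k) (Suc n - k)"
proof -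
  have "Suc n - (k - 1) = Suc (Suc n - k)"
    using assms by simp
  then show ?thesis
    using assms by (simp add: falling_Suc_left of_nat_diff algebra_simps)
qed

lemma krav_coeff_structure:
  assumes "1 \<le> n"
  shows "real k * krav_coeff N p n k
    = real n * krav_coeff N p n k + real n * p * (real N - real n + 1) * krav_coeff N p (n - 1) k"
proof (cases "k < n")
  case True
  obtain n' where n: "n = Suc n'"
    using assms by (cases n) auto
  have kn: "k \<le> n'"
    using True n by simp
  define c where "c = real (n choose k)"
  define c' where "c' = real (n' choose k)"
  define q where "q = (- p) ^ (n' - k)"
  define P where "P = falling (real N - real k) (n' - k)"
  have "real (n - k) * c = real n * c'"
    using binomial_absorb_comp [of n k] n unfolding c_def c'_def by (metis of_nat_mult diff_Suc_1)
  then have binom: "(real n - real k) * c = real n * c'"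
    using kn n by (simp add: of_nat_diff)
  have coeff_n: "krav_coeff N p n k = c * (- p) * q * P * (real N - real n')"
    using n kn falling_tail_Suc [OF kn, of N]
    by (simp add: krav_coeff_def c_def q_def P_def Suc_diff_le)
  have coeff_pred: "krav_coeff N p (n - 1) k = c' * q * P"
    using n by (simp add: krav_coeff_def c'_def q_def P_def)
  have shift: "real N - real n + 1 = real N - real n'"
    using n by simp
  have "real k * krav_coeff N p n k
      - (real n * krav_coeff N p n k + real n * p * (real N - real n + 1) * krav_coeff N p (n - 1) k)
    = p * q * P * (real N - real n') * ((real n - real k) * c - real n * c')"
    unfolding coeff_n coeff_pred shift by (simp add: algebra_simps)
  then show ?thesis
    using binom by simp
qed (use assms in \<open>auto simp: krav_coeff_eq_0\<close>)

lemma binomial_neighbours: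
  "real ((k + d + 1) choose k) * (real d + 1) = real ((k + d) choose k) * (real k + real d + 1)"
  "real ((k + d + 2) choose k) * (real d + 2) = real ((k + d + 1) choose k) * (real k + real d + 2)"
  "(if k = 0 then 0 else real ((k + d + 1) choose (k - 1))) * (real d + 2) = real ((k + d + 1) choose k) * real k"
proof -
  show "real ((k + d + 1) choose k) * (real d + 1) = real ((k + d) choose k) * (real k + real d + 1)"
    using binomial_absorb_comp [of "k + d + 1" k] by (simp flip: of_nat_mult add: algebra_simps)
  show "real ((k + d + 2) choose k) * (real d + 2) = real ((k + d + 1) choose k) * (real k + real d + 2)"
    using binomial_absorb_comp [of "k + d + 2" k] by (simp flip: of_nat_mult add: algebra_simps)
  show "(if k = 0 then 0 else real ((k + d + 1) choose (k - 1))) * (real d + 2) = real ((k + d + 1) choose k) * real k"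
  proof (cases k)
    case (Suc k')
    then show ?thesis
      using Suc_times_binomial_add [of k' "Suc d"] by (simp flip: of_nat_mult add: algebra_simps)
  qed simp
qed

lemma krav_recurrence_identity:
  fixes c0 c1 c2 c3 d k M p :: real
  assumes "c1 * (d + 1) = c0 * (k + d + 1)" "c2 * (d + 2) = c1 * (k + d + 2)" "c3 * (d + 2) = c1 * k"
    and "d + 2 \<noteq> 0"
  shows "c2 * p * (M - 1) - (p * M + (k + d + 1) * (1 - p) - p) * c1 + (k + d + 1) * (1 - p) * c0
    = c3 * p * (M + d + 1) - k * c1"
  using assms by algebra

lemma krav_coeff_recurrence_below:
  assumes "k < n"
  shows "krav_coeff N p (Suc n) k + alphaK N p n * krav_coeff N p n k + betaK N p n * krav_coeff N p (n - 1) k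
       = (if k = 0 then 0 else krav_coeff N p n (k - 1)) + real k * krav_coeff N p n k"
proof -
  define d where "d = n - k - 1"
  have n: "n = k + d + 1"
    using assms d_def by simp
  define c0 where "c0 = real ((k + d) choose k)"
  define c1 where "c1 = real ((k + d + 1) choose k)"
  define c2 where "c2 = real ((k + d + 2) choose k)"
  define c3 where "c3 = (if k = 0 then 0 else real ((k + d + 1) choose (k - 1)))"
  define M where "M = real N - real k - real d"
  define q where "q = (- p) ^ d"
  define P where "P = falling (real N - real k) d"
  have tail1: "falling (real N - real k) (Suc (k + d) - k) = P * M"
    using falling_tail_Suc [of k "k + d" N] by (simp add: P_def M_def)
  have tail2: "falling (real N - real k) (Suc (Suc (k + d)) - k) = P * M * (M - 1)"
    using falling_tail_Suc [of k "Suc (k + d)" N] tail1 by (simp add: M_def)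
  have reduced:
    "c2 * p * (M - 1) - (p * M + (real k + real d + 1) * (1 - p) - p) * c1 + (real k + real d + 1) * (1 - p) * c0
      = c3 * p * (M + real d + 1) - real k * c1"
    unfolding c0_def c1_def c2_def c3_def by (intro krav_recurrence_identity binomial_neighbours) simp
  have "krav_coeff N p (n - 1) k = c0 * q * P"
    using n by (simp add: krav_coeff_def c0_def q_def P_def)
  moreover have "krav_coeff N p n k = c1 * (- p) * q * P * M"
    using n tail1 by (simp add: krav_coeff_def c1_def q_def)
  moreover have "krav_coeff N p (Suc n) k = c2 * p\<^sup>2 * q * P * M * (M - 1)"
    using n tail2 by (simp add: krav_coeff_def c2_def q_def Suc_diff_le power2_eq_square)
  moreover have "(if k = 0 then 0 else krav_coeff N p n (k - 1)) = c3 * p\<^sup>2 * q * P * M * (M + real d + 1)"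
    using n falling_tail_pred [of k "k + d" N] tail1
    by (auto simp: krav_coeff_def c3_def q_def M_def power2_eq_square)
  moreover have "alphaK N p n = p * M + (real k + real d + 1) * (1 - p) - p"
    using n by (simp add: alphaK_def M_def algebra_simps)
  moreover have "betaK N p n = (real k + real d + 1) * p * (1 - p) * M"
    using n by (simp add: betaK_def M_def algebra_simps)
  ultimately show ?thesis
    using arg_cong [OF reduced, of "\<lambda>t. p * q * P * M * t"]
    by (simp only:) (simp add: algebra_simps power2_eq_square)
qed

lemma krav_coeff_recurrence:
  "krav_coeff N p (Suc n) k + alphaK N p n * krav_coeff N p n k + betaK N p n * krav_coeff N p (n - 1) k
     = (if k = 0 then 0 else krav_coeff N p n (k - 1)) + real k * krav_coeff N p n k"
proof -
  consider "k < n" | "k = n" | "k = Suc n" | "Suc n < k"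
    by linarith
  then show ?thesis
  proof cases
    case 1
    then show ?thesis
      by (rule krav_coeff_recurrence_below)
  next
    case 2
    show ?thesis
    proof (cases n)
      case (Suc n')
      have "krav_coeff N p (Suc n) n = real (Suc n) * (- p) * (real N - real n)"
        by (simp add: krav_coeff_def falling_Suc)
      moreover have "krav_coeff N p n n' = real n * (- p) * (real N - real n')"
        using Suc by (simp add: krav_coeff_def falling_Suc)
      ultimately show ?thesis
        using 2 Suc by (simp add: krav_coeff_eq_0 alphaK_def algebra_simps)
    qed (use 2 in \<open>simp add: krav_coeff_def alphaK_def betaK_def falling_Suc\<close>)
  qed (auto simp: krav_coeff_eq_0)
qed

lemma krav_eq_sum_lessThan: "n < M \<Longrightarrow> krav N p n x = (\<Sum>k<M. krav_coeff N p n k * falling x k)"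
  unfolding krav_def
  by (rule sum.mono_neutral_left) (auto simp: krav_coeff_eq_0)

lemma krav_structure_relation:
  assumes "1 \<le> n"
  shows "x * (krav N p n x - krav N p n (x - 1))
    = real n * krav N p n x + real n * p * (real N - real n + 1) * krav N p (n - 1) x"
proof -
  have "x * (krav N p n x - krav N p n (x - 1))
      = (\<Sum>k\<le>n. krav_coeff N p n k * (x * (falling x k - falling (x - 1) k)))"
    unfolding krav_def by (simp add: sum_distrib_left sum_subtractf [symmetric] algebra_simps)
  also have "\<dots> = (\<Sum>k\<le>n. (real k * krav_coeff N p n k) * falling x k)"
    unfolding x_times_bdiff_falling by (simp add: algebra_simps)
  also have "\<dots> = (\<Sum>k\<le>n. (real n * krav_coeff N p n k
      + real n * p * (real N - real n + 1) * krav_coeff N p (n - 1) k) * falling x k)"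
    using krav_coeff_structure [OF assms] by simp
  also have "\<dots> = real n * krav N p n x
      + real n * p * (real N - real n + 1) * (\<Sum>k\<le>n. krav_coeff N p (n - 1) k * falling x k)"
    unfolding krav_def by (simp add: distrib_right sum.distrib sum_distrib_left mult.assoc)
  also have "(\<Sum>k\<le>n. krav_coeff N p (n - 1) k * falling x k) = krav N p (n - 1) x"
    using krav_eq_sum_lessThan [of "n - 1" "Suc n"] assms by (simp add: lessThan_Suc_atMost)
  finally show ?thesis .
qed

lemma krav_three_term:
  "x * krav N p n x = krav N p (Suc n) x + alphaK N p n * krav N p n x + betaK N p n * krav N p (n - 1) x"
proof -
  let ?M = "Suc (Suc n)"
  let ?shift = "\<lambda>k. if k = 0 then 0 else krav_coeff N p n (k - 1)"
  have "x * krav N p n x = (\<Sum>k<?M. krav_coeff N p n k * (x * falling x k))"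
    using krav_eq_sum_lessThan [of n ?M] by (simp add: sum_distrib_left algebra_simps)
  also have "\<dots> = (\<Sum>k<?M. krav_coeff N p n k * falling x (Suc k))
      + (\<Sum>k<?M. real k * krav_coeff N p n k * falling x k)"
    unfolding sum.distrib [symmetric] by (rule sum.cong) (simp_all add: falling_Suc algebra_simps)
  also have "(\<Sum>k<?M. krav_coeff N p n k * falling x (Suc k)) = (\<Sum>k<Suc ?M. ?shift k * falling x k)"
    by (subst sum.lessThan_Suc_shift) simp
  also have "(\<Sum>k<?M. real k * krav_coeff N p n k * falling x k)
      = (\<Sum>k<Suc ?M. real k * krav_coeff N p n k * falling x k)"
    by (simp add: krav_coeff_eq_0)
  finally have "x * krav N p n x = (\<Sum>k<Suc ?M. (?shift k + real k * krav_coeff N p n k) * falling x k)"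
    by (simp add: sum.distrib algebra_simps)
  also have "\<dots> = (\<Sum>k<Suc ?M. (krav_coeff N p (Suc n) k + alphaK N p n * krav_coeff N p n k
      + betaK N p n * krav_coeff N p (n - 1) k) * falling x k)"
    by (simp only: krav_coeff_recurrence)
  also have "\<dots> = krav N p (Suc n) x + alphaK N p n * krav N p n x + betaK N p n * krav N p (n - 1) x"
    using krav_eq_sum_lessThan [of "Suc n" "Suc ?M"] krav_eq_sum_lessThan [of n "Suc ?M"]
      krav_eq_sum_lessThan [of "n - 1" "Suc ?M"]
    by (simp add: sum.distrib sum_distrib_left algebra_simps)
  finally show ?thesis .
qed

primrec falling_poly :: "nat \<Rightarrow> real poly" where
  "falling_poly 0 = 1"
| "falling_poly (Suc k) = falling_poly k * [:- real k, 1:]"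

lemma poly_falling_poly [simp]: "poly (falling_poly k) x = falling x k"
  by (induction k) (simp_all add: falling_Suc algebra_simps)

lemma degree_falling_poly [simp]: "degree (falling_poly k) = k"
  and coeff_falling_poly_self: "coeff (falling_poly k) k = 1"
proof (induction k)
  case (Suc k)
  have "falling_poly k \<noteq> 0"
    using Suc by auto
  then have "degree (falling_poly (Suc k)) = Suc k"
    using Suc degree_mult_eq [of "falling_poly k" "[:- real k, 1:]"] by simp
  moreover have "lead_coeff (falling_poly (Suc k)) = 1"
    using Suc lead_coeff_mult [of "falling_poly k" "[:- real k, 1:]"] by simp
  ultimately show "degree (falling_poly (Suc k)) = Suc k" "coeff (falling_poly (Suc k)) (Suc k) = 1"
    by simp_all
qed simp_all

definition krav_poly :: "nat \<Rightarrow> real \<Rightarrow> nat \<Rightarrow> real poly" where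
  "krav_poly N p n = (\<Sum>k\<le>n. smult (krav_coeff N p n k) (falling_poly k))"

lemma poly_krav_poly [simp]: "poly (krav_poly N p n) = krav N p n"
  by (simp add: fun_eq_iff krav_poly_def krav_def poly_sum)

lemma degree_krav_poly [simp]: "degree (krav_poly N p n) = n"
  and coeff_krav_poly_self [simp]: "coeff (krav_poly N p n) n = 1"
proof -
  have le: "degree (krav_poly N p n) \<le> n"
    unfolding krav_poly_def
    by (rule degree_sum_le) (auto intro: order.trans [OF degree_smult_le])
  have "coeff (krav_poly N p n) n = (\<Sum>k\<le>n. krav_coeff N p n k * coeff (falling_poly k) n)"
    by (simp add: krav_poly_def coeff_sum)
  also have "\<dots> = (\<Sum>k\<in>{n}. krav_coeff N p n k * coeff (falling_poly k) n)"
    by (rule sum.mono_neutral_right) (auto intro!: coeff_eq_0)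
  finally have c: "coeff (krav_poly N p n) n = 1"
    by (simp add: coeff_falling_poly_self)
  then have "n \<le> degree (krav_poly N p n)"
    by (simp add: le_degree)
  with le show "degree (krav_poly N p n) = n"
    by simp
  from c show "coeff (krav_poly N p n) n = 1" .
qed

section \<open>Orthogonality with respect to the binomial weight\<close>

definition wsum :: "nat \<Rightarrow> real \<Rightarrow> (real \<Rightarrow> real) \<Rightarrow> real" where
  "wsum N p f = (\<Sum>x\<le>N. f (real x) * bweight N p x)"

lemma wsum_add: "wsum N p (\<lambda>x. f x + g x) = wsum N p f + wsum N p g"
  by (simp add: wsum_def algebra_simps sum.distrib)

lemma wsum_diff: "wsum N p (\<lambda>x. f x - g x) = wsum N p f - wsum N p g"
  by (simp add: wsum_def algebra_simps sum_subtractf)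

lemma wsum_cmult: "wsum N p (\<lambda>x. c * f x) = c * wsum N p f"
  by (simp add: wsum_def algebra_simps sum_distrib_left)

lemma wsum_sum: "wsum N p (\<lambda>x. \<Sum>k\<in>A. f k x) = (\<Sum>k\<in>A. wsum N p (f k))"
  unfolding wsum_def by (simp add: sum_distrib_right sum.swap [of _ A])

lemma bweight_pos: "0 < p \<Longrightarrow> p < 1 \<Longrightarrow> x \<le> N \<Longrightarrow> bweight N p x > 0"
  by (simp add: bweight_def)

lemma wsum_square_nonneg: "0 < p \<Longrightarrow> p < 1 \<Longrightarrow> wsum N p (\<lambda>x. (f x)\<^sup>2) \<ge> 0"
  unfolding wsum_def using bweight_pos
  by (intro sum_nonneg mult_nonneg_nonneg) (auto intro: less_imp_le)

lemma wsum_square_eq_0_imp: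
  assumes "0 < p" "p < 1" "wsum N p (\<lambda>x. (f x)\<^sup>2) = 0" "x \<le> N"
  shows "f (real x) = 0"
proof -
  have "\<forall>x\<in>{..N}. (f (real x))\<^sup>2 * bweight N p x = 0"
    using assms(3) unfolding wsum_def
    by (subst sum_nonneg_eq_0_iff [symmetric])
       (auto intro!: mult_nonneg_nonneg less_imp_le [OF bweight_pos [OF assms(1,2)]])
  then show ?thesis
    using assms(4) bweight_pos [OF assms(1,2,4)] by force
qed

lemma poly_eq_0_if_vanishes_on_nodes:
  fixes d :: "real poly"
  assumes "\<And>x. x \<le> N \<Longrightarrow> poly d (real x) = 0" "degree d \<le> N"
  shows "d = 0"
proof (rule ccontr)
  assume nz: "d \<noteq> 0"
  have "Suc N = card (real ` {..N})"
    by (simp add: card_image)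
  also have "\<dots> \<le> card {x. poly d x = 0}"
    using assms(1) by (intro card_mono [OF poly_roots_finite [OF nz]]) auto
  also have "\<dots> \<le> degree d"
    by (rule card_poly_roots_bound [OF nz])
  finally show False
    using assms(2) by simp
qed

lemma falling_times_bweight:
  assumes "k \<le> x" "x \<le> N"
  shows "falling (real x) k * bweight N p x
    = falling (real N) k * p ^ k * (real ((N - k) choose (x - k)) * p ^ (x - k) * (1 - p) ^ (N - k - (x - k)))"
proof -
  have "falling (real x) k = fact x / fact (x - k)"
    using falling_of_nat_fact [OF assms(1)] by (simp add: field_simps)
  moreover have "falling (real N) k = fact N / fact (N - k)"
    using falling_of_nat_fact [of k N] assms by (simp add: field_simps)
  moreover have "real (N choose x) = fact N / (fact x * fact (N - x))"
    using assms by (simp add: binomial_fact)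
  moreover have "real ((N - k) choose (x - k)) = fact (N - k) / (fact (x - k) * fact (N - x))"
    using assms binomial_fact [of "x - k" "N - k"] by (simp add: diff_le_mono)
  moreover have "p ^ x = p ^ k * p ^ (x - k)"
    using assms by (simp add: power_add [symmetric])
  moreover have "N - k - (x - k) = N - x"
    using assms by simp
  ultimately show ?thesis
    unfolding bweight_def by (simp only:) (simp add: field_simps)
qed

lemma wsum_falling: "wsum N p (\<lambda>x. falling x k) = falling (real N) k * p ^ k"
proof (cases "k \<le> N")
  case False
  then show ?thesis
    unfolding wsum_def by (simp add: falling_of_nat_eq_0)
next
  case True
  have "wsum N p (\<lambda>x. falling x k) = (\<Sum>x\<in>{k..N}. falling (real x) k * bweight N p x)"
    unfolding wsum_def by (rule sum.mono_neutral_right) (auto simp: falling_of_nat_eq_0)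
  also have "\<dots> = (\<Sum>x\<in>{k..N}. falling (real N) k * p ^ k
      * (real ((N - k) choose (x - k)) * p ^ (x - k) * (1 - p) ^ (N - k - (x - k))))"
    by (rule sum.cong) (auto simp: falling_times_bweight)
  also have "\<dots> = (\<Sum>i\<in>{0..N - k}. falling (real N) k * p ^ k
      * (real ((N - k) choose i) * p ^ i * (1 - p) ^ (N - k - i)))"
  proof -
    have "{k..N} = {0 + k..(N - k) + k}"
      using True by simp
    then show ?thesis
      by (simp only: sum.shift_bounds_cl_nat_ivl) simp
  qed
  also have "\<dots> = falling (real N) k * p ^ k * (p + (1 - p)) ^ (N - k)"
    unfolding binomial_ring by (simp add: sum_distrib_left atLeast0AtMost)
  finally show ?thesis
    by simp
qed

lemma wsum_krav:
  assumes "0 < p" "p < 1" "1 \<le> n"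
  shows "wsum N p (krav N p n) = 0"
proof -
  have "wsum N p (krav N p n) = (\<Sum>k\<le>n. krav_coeff N p n k * (falling (real N) k * p ^ k))"
    unfolding krav_def by (simp add: wsum_sum wsum_cmult wsum_falling)
  also have "\<dots> = (\<Sum>k\<le>n. falling (real N) n * p ^ n * (real (n choose k) * 1 ^ k * (-1) ^ (n - k)))"
  proof (rule sum.cong [OF refl])
    fix k
    assume "k \<in> {..n}"
    then have k: "k \<le> n"
      by simp
    have "falling (real N) n = falling (real N) k * falling (real N - real k) (n - k)"
      using falling_add [of "real N" k "n - k"] k by simp
    moreover have "p ^ n = p ^ k * p ^ (n - k)"
      using k by (simp add: power_add [symmetric])
    ultimately show "krav_coeff N p n k * (falling (real N) k * p ^ k)
        = falling (real N) n * p ^ n * (real (n choose k) * 1 ^ k * (-1) ^ (n - k))"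
      unfolding krav_coeff_def by (simp add: power_minus [of p] algebra_simps)
  qed
  also have "\<dots> = falling (real N) n * p ^ n * (1 + (-1)) ^ n"
    by (simp only: sum_distrib_left binomial_ring)
  finally show ?thesis
    using assms(3) by simp
qed

lemma wsum_power_times_krav:
  assumes "0 < p" "p < 1" "i < n"
  shows "wsum N p (\<lambda>x. x ^ i * krav N p n x) = 0"
  using assms(3)
proof (induction i arbitrary: n)
  case 0
  then show ?case
    using wsum_krav [OF assms(1,2), of n] by simp
next
  case (Suc i)
  have "x ^ Suc i * krav N p n x = x ^ i * krav N p (Suc n) x
      + (alphaK N p n * (x ^ i * krav N p n x) + betaK N p n * (x ^ i * krav N p (n - 1) x))" for x
  proof -
    have "x ^ Suc i * krav N p n x = x ^ i * (x * krav N p n x)"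
      by simp
    then show ?thesis
      unfolding krav_three_term by (simp add: algebra_simps)
  qed
  then show ?case
    using Suc by (simp add: wsum_add wsum_cmult)
qed

lemma wsum_poly_times_krav:
  assumes "0 < p" "p < 1" "degree q < n"
  shows "wsum N p (\<lambda>x. poly q x * krav N p n x) = 0"
proof -
  have "(\<lambda>x. poly q x * krav N p n x) = (\<lambda>x. \<Sum>i\<le>degree q. coeff q i * (x ^ i * krav N p n x))"
    by (simp add: fun_eq_iff poly_altdef sum_distrib_right mult.assoc)
  then show ?thesis
    using wsum_power_times_krav [OF assms(1,2)] assms(3) by (simp add: wsum_sum wsum_cmult)
qed

definition krav_norm2 :: "nat \<Rightarrow> real \<Rightarrow> nat \<Rightarrow> real" where
  "krav_norm2 N p k = wsum N p (\<lambda>x. (krav N p k x)\<^sup>2)"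

context
  fixes N :: nat and p :: real
  assumes p_pos: "0 < p" and p_less_1: "p < 1"
begin

lemma krav_norm2_pos: "k \<le> N \<Longrightarrow> krav_norm2 N p k > 0"
proof -
  assume k: "k \<le> N"
  have "krav_norm2 N p k \<noteq> 0"
  proof
    assume "krav_norm2 N p k = 0"
    then have "poly (krav_poly N p k) (real x) = 0" if "x \<le> N" for x
      using wsum_square_eq_0_imp [OF p_pos p_less_1 _ that] unfolding krav_norm2_def by simp
    then have "krav_poly N p k = 0"
      using k by (intro poly_eq_0_if_vanishes_on_nodes [of N]) auto
    then show False
      using coeff_krav_poly_self [of N p k] by simp
  qed
  moreover have "krav_norm2 N p k \<ge> 0"
    unfolding krav_norm2_def by (rule wsum_square_nonneg [OF p_pos p_less_1])
  ultimately show ?thesis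
    by simp
qed

lemma krav_orthogonal: "a \<noteq> b \<Longrightarrow> wsum N p (\<lambda>x. krav N p a x * krav N p b x) = 0"
proof (induction a b rule: linorder_wlog)
  case (le a b)
  then show ?case
    using wsum_poly_times_krav [OF p_pos p_less_1, of "krav_poly N p a" b N] by simp
next
  case (sym a b)
  then show ?case
    by (simp add: mult.commute)
qed

lemma krav_norm2_rec:
  assumes "1 \<le> m"
  shows "krav_norm2 N p m = betaK N p m * krav_norm2 N p (m - 1)"
proof -
  let ?K = "krav N p"
  have "x * ?K m x * ?K (m - 1) x = ?K m x * ?K m x + alphaK N p (m - 1) * (?K m x * ?K (m - 1) x)
      + betaK N p (m - 1) * (?K m x * ?K (m - 1 - 1) x)" for x
  proof -
    have "x * ?K (m - 1) x = ?K m x + alphaK N p (m - 1) * ?K (m - 1) x + betaK N p (m - 1) * ?K (m - 1 - 1) x"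
      using krav_three_term [of x N p "m - 1"] assms by simp
    then have "?K m x * (x * ?K (m - 1) x)
        = ?K m x * (?K m x + alphaK N p (m - 1) * ?K (m - 1) x + betaK N p (m - 1) * ?K (m - 1 - 1) x)"
      by (rule arg_cong)
    then show ?thesis
      by (simp add: algebra_simps)
  qed
  then have "wsum N p (\<lambda>x. x * ?K m x * ?K (m - 1) x) = krav_norm2 N p m"
    using krav_orthogonal [of m "m - 1"] krav_orthogonal [of m "m - 1 - 1"] assms
    by (simp add: wsum_add wsum_cmult krav_norm2_def power2_eq_square)
  moreover have "x * ?K m x * ?K (m - 1) x = ?K (Suc m) x * ?K (m - 1) x
      + alphaK N p m * (?K m x * ?K (m - 1) x) + betaK N p m * (?K (m - 1) x * ?K (m - 1) x)" for x
    unfolding krav_three_term by (simp add: algebra_simps)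
  then have "wsum N p (\<lambda>x. x * ?K m x * ?K (m - 1) x) = betaK N p m * krav_norm2 N p (m - 1)"
    using krav_orthogonal [of "Suc m" "m - 1"] krav_orthogonal [of m "m - 1"] assms
    by (simp add: wsum_add wsum_cmult krav_norm2_def power2_eq_square)
  ultimately show ?thesis
    by simp
qed

lemma christoffel_darboux:
  assumes "1 \<le> m" "m \<le> N"
  shows "krav N p m x * krav N p (m - 1) y - krav N p (m - 1) x * krav N p m y
     = (x - y) * krav_norm2 N p (m - 1) * (\<Sum>k<m. krav N p k x * krav N p k y / krav_norm2 N p k)"
  using assms
proof (induction m rule: nat_induct_at_least)
  case base
  have "krav_norm2 N p 0 \<noteq> 0"
    using krav_norm2_pos [of 0] by simp
  then show ?case
    by (simp add: krav_def krav_coeff_def falling_def)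
next
  case (Suc m)
  have "krav_norm2 N p m \<noteq> 0"
    using krav_norm2_pos [of m] Suc by simp
  then have "(x - y) * krav_norm2 N p m * (\<Sum>k<Suc m. krav N p k x * krav N p k y / krav_norm2 N p k)
      = (x - y) * krav_norm2 N p m * (\<Sum>k<m. krav N p k x * krav N p k y / krav_norm2 N p k)
        + (x - y) * krav N p m x * krav N p m y"
    by (simp add: distrib_left)
  also have "(x - y) * krav_norm2 N p m * (\<Sum>k<m. krav N p k x * krav N p k y / krav_norm2 N p k)
      = betaK N p m * (krav N p m x * krav N p (m - 1) y - krav N p (m - 1) x * krav N p m y)"
    using Suc krav_norm2_rec [of m] by simp
  moreover have "krav N p (Suc m) z
      = z * krav N p m z - alphaK N p m * krav N p m z - betaK N p m * krav N p (m - 1) z" for z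
    using krav_three_term [of z N p m] by simp
  ultimately show ?case
    by (simp only:) (simp add: algebra_simps)
qed

lemma krav_span:
  "degree r < m \<Longrightarrow> \<exists>c. \<forall>x. poly r x = (\<Sum>k<m. c k * krav N p k x)"
proof (induction m arbitrary: r)
  case (Suc m)
  define r' where "r' = r - smult (coeff r m) (krav_poly N p m)"
  have "degree r' \<le> m"
    unfolding r'_def using Suc.prems
    by (intro degree_diff_le) (auto intro: order.trans [OF degree_smult_le])
  moreover have "coeff r' m = 0"
    unfolding r'_def by simp
  ultimately have "degree r' < m \<or> r' = 0"
    by (metis le_neq_implies_less leading_coeff_0_iff)
  moreover have "\<exists>c. \<forall>x. poly 0 x = (\<Sum>k<m. c k * krav N p k x)"
    by (intro exI [of _ "\<lambda>_. 0"]) simp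
  ultimately obtain c where c: "\<forall>x. poly r' x = (\<Sum>k<m. c k * krav N p k x)"
    using Suc.IH by blast
  have "poly r x = poly r' x + coeff r m * krav N p m x" for x
    by (simp add: r'_def)
  then show ?case
    using c by (intro exI [of _ "c(m := coeff r m)"]) simp
qed simp

lemma krav_fourier_expansion:
  assumes "degree r < m" "m \<le> Suc N"
  shows "poly r x = (\<Sum>k<m. wsum N p (\<lambda>t. poly r t * krav N p k t) / krav_norm2 N p k * krav N p k x)"
proof -
  obtain c where c: "\<forall>x. poly r x = (\<Sum>k<m. c k * krav N p k x)"
    using krav_span [OF assms(1)] by blast
  have "wsum N p (\<lambda>t. poly r t * krav N p i t) / krav_norm2 N p i = c i" if i: "i < m" for i
  proof -
    have "wsum N p (\<lambda>t. poly r t * krav N p i t) = (\<Sum>k<m. c k * wsum N p (\<lambda>t. krav N p k t * krav N p i t))"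
      unfolding c [rule_format] by (simp add: sum_distrib_right wsum_sum wsum_cmult mult.assoc)
    also have "\<dots> = c i * krav_norm2 N p i"
      using i krav_orthogonal
      by (subst sum.remove [of _ i]) (auto simp: krav_norm2_def power2_eq_square)
    finally show ?thesis
      using krav_norm2_pos [of i] i assms(2) by simp
  qed
  then show ?thesis
    using c by simp
qed

end

section \<open>Reproducing kernels\<close>

definition kkern :: "nat \<Rightarrow> real \<Rightarrow> nat \<Rightarrow> nat \<Rightarrow> real \<Rightarrow> real \<Rightarrow> real" where
  "kkern N p j m a b = (\<Sum>k<m. fdiffs j (krav N p k) a * fdiffs j (krav N p k) b / krav_norm2 N p k)"

definition kern_poly :: "nat \<Rightarrow> real \<Rightarrow> nat \<Rightarrow> nat \<Rightarrow> real \<Rightarrow> real poly" where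
  "kern_poly N p j m y = (\<Sum>k<m. smult (fdiffs j (krav N p k) y / krav_norm2 N p k) (krav_poly N p k))"

lemma kkern_commute: "kkern N p j m a b = kkern N p j m b a"
  unfolding kkern_def by (simp add: mult.commute)

lemma poly_kern_poly: "poly (kern_poly N p j m y) x = (\<Sum>k<m. fdiffs j (krav N p k) y / krav_norm2 N p k * krav N p k x)"
  by (simp add: kern_poly_def poly_sum)

lemma fdiffs_kern_poly: "fdiffs j (poly (kern_poly N p j m y)) z = kkern N p j m y z"
proof -
  have "poly (kern_poly N p j m y) = (\<lambda>x. \<Sum>k<m. (fdiffs j (krav N p k) y / krav_norm2 N p k) * krav N p k x)"
    by (simp add: fun_eq_iff poly_kern_poly)
  then have "fdiffs j (poly (kern_poly N p j m y)) z
      = (\<Sum>k<m. (fdiffs j (krav N p k) y / krav_norm2 N p k) * fdiffs j (krav N p k) z)"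
    by (simp only: fdiffs_lincomb)
  then show ?thesis
    by (simp add: kkern_def)
qed

lemma degree_kern_poly: "1 \<le> m \<Longrightarrow> degree (kern_poly N p j m y) < m"
proof -
  assume "1 \<le> m"
  have "degree (kern_poly N p j m y) \<le> m - 1"
    unfolding kern_poly_def
    by (rule degree_sum_le) (auto intro: order.trans [OF degree_smult_le])
  with \<open>1 \<le> m\<close> show ?thesis
    by simp
qed

context
  fixes N :: nat and p :: real
  assumes p_pos: "0 < p" and p_less_1: "p < 1"
begin

lemma Kraw_eq: "k \<le> N \<Longrightarrow> Kraw N p k = krav N p k"
  using Kraw_eq_krav p_pos by simp

lemma Knorm2_eq: "k \<le> N \<Longrightarrow> Knorm2 N p k = krav_norm2 N p k"
  by (simp add: Knorm2_def krav_norm2_def wsum_def Kraw_eq)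

text \<open>Differencing the Christoffel-Darboux identity \<open>j\<close> times in \<open>y\<close> and summing its Newton series
  at \<open>x\<close> isolates the kernel; the Newton weight \<open>[x - y]\<^sub>j\<^sub>+\<^sub>1\<close> is where \<open>x \<notin> \<int>\<close> is needed.\<close>
lemma kernel_connection:
  assumes "1 \<le> m" "m \<le> N" "x \<notin> \<int>"
  shows "(\<Sum>k<m. krav N p k x * fdiffs j (krav N p k) (real y) / krav_norm2 N p k)
     = Acal N p j m x (real y) * krav N p m x + Bcal N p j m x (real y) * krav N p (m - 1) x"
proof -
  define h where "h = krav_norm2 N p (m - 1)"
  define G where "G y' = h * (\<Sum>k<m. krav N p k x * krav N p k y' / krav_norm2 N p k)" for y'
  define F where "F y' = krav N p m x * krav N p (m - 1) y' - krav N p (m - 1) x * krav N p m y'" for y'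
  define S where "S K = (\<Sum>k\<le>j. fdiffs k K (real y) / fact k * falling (x - real y) k)" for K
  have h_pos: "h > 0"
    unfolding h_def using krav_norm2_pos [OF p_pos p_less_1] assms by simp
  have falling_nonzero: "falling (x - real y) (Suc j) \<noteq> 0"
    by (rule falling_nonzero_if_not_Ints [OF assms(3)])
  have "G = (\<lambda>y'. \<Sum>k<m. (h * krav N p k x / krav_norm2 N p k) * krav N p k y')"
    unfolding G_def by (simp add: fun_eq_iff sum_distrib_left algebra_simps)
  then have "fdiffs j G (real y) = (\<Sum>k<m. (h * krav N p k x / krav_norm2 N p k) * fdiffs j (krav N p k) (real y))"
    by (simp only: fdiffs_lincomb)
  then have "fdiffs j G (real y) = h * (\<Sum>k<m. krav N p k x * fdiffs j (krav N p k) (real y) / krav_norm2 N p k)"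
    by (simp add: sum_distrib_left mult.assoc)
  moreover have "F = (\<lambda>y'. (x - y') * G y')"
    unfolding F_def G_def h_def using christoffel_darboux [OF p_pos p_less_1 assms(1,2)] by (simp add: fun_eq_iff)
  then have "(\<Sum>k\<le>j. fdiffs k F (real y) * falling (x - real y) k / fact k)
      = falling (x - real y) (Suc j) / fact j * fdiffs j G (real y)"
    by (simp only: newton_series_linear_factor)
  moreover have "fdiffs k F = (\<lambda>y'. krav N p m x * fdiffs k (krav N p (m - 1)) y'
      - krav N p (m - 1) x * fdiffs k (krav N p m) y')" for k
    unfolding F_def by (simp add: fdiffs_diff fdiffs_cmult)
  then have "(\<Sum>k\<le>j. fdiffs k F (real y) * falling (x - real y) k / fact k)
      = krav N p m x * S (krav N p (m - 1)) - krav N p (m - 1) x * S (krav N p m)"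
    unfolding S_def sum_distrib_left sum_subtractf [symmetric] by (intro sum.cong) (simp_all add: field_simps)
  ultimately have "krav N p m x * S (krav N p (m - 1)) - krav N p (m - 1) x * S (krav N p m)
      = falling (x - real y) (Suc j) / fact j * h
        * (\<Sum>k<m. krav N p k x * fdiffs j (krav N p k) (real y) / krav_norm2 N p k)"
    by simp
  then show ?thesis
    using assms(1,2) falling_nonzero h_pos
    unfolding Acal_def Bcal_def S_def h_def
    by (simp add: Knorm2_eq Kraw_eq field_simps)
qed

lemma kern_eq_kkern: "m \<le> N \<Longrightarrow> kern N p m j j a b = kkern N p j m a b"
  unfolding kern_def kkern_def
  by (rule sum.cong) (auto simp: Kraw_eq Knorm2_eq)

lemma kkern_cauchy_schwarz:
  assumes "m \<le> N"
  shows "(kkern N p j m a b)\<^sup>2 \<le> kkern N p j m a a * kkern N p j m b b" "kkern N p j m a a \<ge> 0"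
proof -
  have pos: "k < m \<Longrightarrow> krav_norm2 N p k > 0" for k
    using krav_norm2_pos [OF p_pos p_less_1, where k = k] assms by simp
  define u where "u z k = fdiffs j (krav N p k) z / sqrt (krav_norm2 N p k)" for z k
  have "kkern N p j m a b = (\<Sum>k<m. u a k * u b k)" for a b
    unfolding kkern_def u_def by (rule sum.cong) (auto simp: pos less_imp_le real_sqrt_mult [symmetric])
  then show "(kkern N p j m a b)\<^sup>2 \<le> kkern N p j m a a * kkern N p j m b b" "kkern N p j m a a \<ge> 0"
    by (simp_all add: Cauchy_Schwarz_ineq_sum sum_nonneg power2_eq_square [symmetric])
qed

lemma wsum_kern_poly_times:
  assumes "degree r < m" "m \<le> N"
  shows "wsum N p (\<lambda>t. poly (kern_poly N p j m y) t * poly r t) = fdiffs j (poly r) y"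
proof -
  let ?c = "\<lambda>k. wsum N p (\<lambda>t. poly r t * krav N p k t) / krav_norm2 N p k"
  have r_expansion: "poly r = (\<lambda>x. \<Sum>k<m. ?c k * krav N p k x)"
    by (rule ext, rule krav_fourier_expansion [OF p_pos p_less_1 assms(1) le_SucI [OF assms(2)]])
  have expansion: "fdiffs j (poly r) y = (\<Sum>k<m. ?c k * fdiffs j (krav N p k) y)"
    by (subst r_expansion, unfold fdiffs_lincomb) (rule refl)
  have integrand: "(\<lambda>t. poly (kern_poly N p j m y) t * poly r t)
      = (\<lambda>t. \<Sum>k<m. (fdiffs j (krav N p k) y / krav_norm2 N p k) * (poly r t * krav N p k t))"
    unfolding poly_kern_poly by (rule ext) (simp add: sum_distrib_left sum_distrib_right mult_ac)
  show ?thesis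
    unfolding integrand wsum_sum wsum_cmult expansion by (simp add: mult_ac)
qed

lemma kern_poly_connection:
  assumes "1 \<le> m" "m \<le> N" "x \<notin> \<int>"
  shows "poly (kern_poly N p j m (real y)) x
    = Acal N p j m x (real y) * krav N p m x + Bcal N p j m x (real y) * krav N p (m - 1) x"
  unfolding poly_kern_poly kernel_connection [OF assms, symmetric]
  by (rule sum.cong) auto

end

section \<open>Kravchuk-Sobolev polynomials\<close>

lemma sip_eq_wsum:
  "sip N p lam mu j f g = wsum N p (\<lambda>t. poly f t * poly g t)
     + lam * fdiffs j (poly f) 0 * fdiffs j (poly g) 0 + mu * fdiffs j (poly f) (real N) * fdiffs j (poly g) (real N)"
  by (simp add: sip_def wsum_def)

lemma sip_diff_left: "sip N p lam mu j (q1 - q2) r = sip N p lam mu j q1 r - sip N p lam mu j q2 r"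
proof -
  have "poly (q1 - q2) = (\<lambda>x. poly q1 x - poly q2 x)"
    by (simp add: fun_eq_iff)
  moreover have "(\<lambda>t. (poly q1 t - poly q2 t) * poly r t) = (\<lambda>t. poly q1 t * poly r t - poly q2 t * poly r t)"
    by (simp add: fun_eq_iff algebra_simps)
  ultimately show ?thesis
    unfolding sip_eq_wsum by (simp add: fdiffs_diff wsum_diff algebra_simps)
qed

lemma sip_self_eq_0_imp:
  assumes "0 < p" "p < 1" "lam > 0" "mu > 0" "sip N p lam mu j e e = 0" "x \<le> N"
  shows "poly e (real x) = 0"
proof -
  have "wsum N p (\<lambda>t. (poly e t)\<^sup>2) \<ge> 0"
    by (rule wsum_square_nonneg [OF assms(1,2)])
  moreover have "lam * (fdiffs j (poly e) 0)\<^sup>2 \<ge> 0" "mu * (fdiffs j (poly e) (real N))\<^sup>2 \<ge> 0"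
    using assms(3,4) by simp_all
  ultimately have "wsum N p (\<lambda>t. (poly e t)\<^sup>2) = 0"
    using assms(5) unfolding sip_eq_wsum power2_eq_square by (simp add: mult.assoc)
  then show ?thesis
    by (rule wsum_square_eq_0_imp [OF assms(1,2) _ assms(6)])
qed

lemma gram_det_pos:
  fixes lam mu a d s :: real
  assumes "lam > 0" "mu > 0" "a \<ge> 0" "d \<ge> 0" "s\<^sup>2 \<le> a * d"
  shows "(1 + lam * a) * (1 + mu * d) - lam * mu * s * s > 0"
proof -
  have "(1 + lam * a) * (1 + mu * d) - lam * mu * s * s = 1 + lam * a + mu * d + lam * mu * (a * d - s\<^sup>2)"
    by (simp add: algebra_simps power2_eq_square)
  moreover have "lam * mu * (a * d - s\<^sup>2) \<ge> 0" "lam * a \<ge> 0" "mu * d \<ge> 0"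
    using assms by simp_all
  ultimately show ?thesis
    by linarith
qed

lemma cramer_2x2:
  fixes lam mu a d s d0 dN \<delta> :: real
  assumes "\<delta> = (1 + lam * a) * (1 + mu * d) - lam * mu * s * s" "\<delta> \<noteq> 0"
  shows "d0 - lam * ((d0 * (1 + mu * d) - mu * s * dN) / \<delta>) * a - mu * (((1 + lam * a) * dN - lam * s * d0) / \<delta>) * s
           = (d0 * (1 + mu * d) - mu * s * dN) / \<delta>"
    and "dN - lam * ((d0 * (1 + mu * d) - mu * s * dN) / \<delta>) * s - mu * (((1 + lam * a) * dN - lam * s * d0) / \<delta>) * d
           = ((1 + lam * a) * dN - lam * s * d0) / \<delta>"
  using assms by (simp_all add: field_simps) algebra+

text \<open>\<open>\<Phi>\<^sub>1, \<Phi>\<^sub>2\<close> are the boundary values \<open>\<Delta>\<^sup>j\<bbbK>\<^sub>m(0), \<Delta>\<^sup>j\<bbbK>\<^sub>m(N)\<close> that this ansatz forces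
  (\<open>fdiffs_sob_poly_boundary\<close>).\<close>
definition sob_poly :: "nat \<Rightarrow> real \<Rightarrow> real \<Rightarrow> real \<Rightarrow> nat \<Rightarrow> nat \<Rightarrow> real poly" where
  "sob_poly N p lam mu j m = krav_poly N p m - smult (lam * Phi1 N p lam mu j m) (kern_poly N p j m 0)
     - smult (mu * Phi2 N p lam mu j m) (kern_poly N p j m (real N))"

lemma degree_sob_poly:
  assumes "1 \<le> m"
  shows "degree (sob_poly N p lam mu j m) = m" "lead_coeff (sob_poly N p lam mu j m) = 1"
proof -
  have kern_degree: "degree (kern_poly N p j m y) < m" for y
    using degree_kern_poly assms by blast
  have "degree (sob_poly N p lam mu j m) \<le> m"
    unfolding sob_poly_def using kern_degree
    by (intro degree_diff_le) (auto intro: order.trans [OF degree_smult_le] less_imp_le)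
  moreover have lead: "coeff (sob_poly N p lam mu j m) m = 1"
    unfolding sob_poly_def using kern_degree by (simp add: coeff_eq_0)
  ultimately show "degree (sob_poly N p lam mu j m) = m"
    by (simp add: le_antisym le_degree)
  with lead show "lead_coeff (sob_poly N p lam mu j m) = 1"
    by simp
qed

context
  fixes N :: nat and p lam mu :: real and j :: nat
  assumes p_pos: "0 < p" and p_less_1: "p < 1" and lam_pos: "lam > 0" and mu_pos: "mu > 0"
begin

lemma deltaS_Phi_kkern:
  assumes "m \<le> N"
  shows "deltaS N p lam mu j m = (1 + lam * kkern N p j m 0 0) * (1 + mu * kkern N p j m (real N) (real N))
           - lam * mu * kkern N p j m 0 (real N) * kkern N p j m 0 (real N)"
    "Phi1 N p lam mu j m = (fdiffs j (krav N p m) 0 * (1 + mu * kkern N p j m (real N) (real N))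
        - mu * kkern N p j m 0 (real N) * fdiffs j (krav N p m) (real N)) / deltaS N p lam mu j m"
    "Phi2 N p lam mu j m = ((1 + lam * kkern N p j m 0 0) * fdiffs j (krav N p m) (real N)
        - lam * kkern N p j m 0 (real N) * fdiffs j (krav N p m) 0) / deltaS N p lam mu j m"
  using assms kkern_commute [of N p j m "real N" 0]
  by (simp_all add: deltaS_def Phi1_def Phi2_def kern_eq_kkern [OF p_pos p_less_1] Kraw_eq [OF p_pos p_less_1])

lemma deltaS_pos: "m \<le> N \<Longrightarrow> deltaS N p lam mu j m > 0"
  unfolding deltaS_Phi_kkern(1)
  using kkern_cauchy_schwarz(1) [OF p_pos p_less_1, where m = m and j = j and a = 0 and b = "real N"]
    kkern_cauchy_schwarz(2) [OF p_pos p_less_1, where m = m and j = j and a = 0]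
    kkern_cauchy_schwarz(2) [OF p_pos p_less_1, where m = m and j = j and a = "real N"]
  by (intro gram_det_pos [OF lam_pos mu_pos]) auto

lemma fdiffs_sob_poly:
  "fdiffs j (poly (sob_poly N p lam mu j m)) z = fdiffs j (krav N p m) z
     - lam * Phi1 N p lam mu j m * kkern N p j m 0 z - mu * Phi2 N p lam mu j m * kkern N p j m (real N) z"
proof -
  have "poly (sob_poly N p lam mu j m) = (\<lambda>x. (krav N p m x - (lam * Phi1 N p lam mu j m) * poly (kern_poly N p j m 0) x)
     - (mu * Phi2 N p lam mu j m) * poly (kern_poly N p j m (real N)) x)"
    by (simp add: fun_eq_iff sob_poly_def)
  then show ?thesis
    by (simp add: fdiffs_diff fdiffs_cmult fdiffs_kern_poly)
qed

lemma fdiffs_sob_poly_boundary: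
  assumes "m \<le> N"
  shows "fdiffs j (poly (sob_poly N p lam mu j m)) 0 = Phi1 N p lam mu j m"
    "fdiffs j (poly (sob_poly N p lam mu j m)) (real N) = Phi2 N p lam mu j m"
proof -
  have "deltaS N p lam mu j m \<noteq> 0"
    using deltaS_pos [OF assms] by simp
  note cramer = cramer_2x2 [OF deltaS_Phi_kkern(1) [OF assms] this]
  show "fdiffs j (poly (sob_poly N p lam mu j m)) 0 = Phi1 N p lam mu j m"
    unfolding fdiffs_sob_poly kkern_commute [of N p j m "real N" 0] deltaS_Phi_kkern(2,3) [OF assms]
    by (rule cramer(1))
  show "fdiffs j (poly (sob_poly N p lam mu j m)) (real N) = Phi2 N p lam mu j m"
    unfolding fdiffs_sob_poly deltaS_Phi_kkern(2,3) [OF assms]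
    by (rule cramer(2))
qed

lemma sob_poly_orthogonal:
  assumes "m \<le> N" "degree r < m"
  shows "sip N p lam mu j (sob_poly N p lam mu j m) r = 0"
proof -
  have "(\<lambda>t. poly (sob_poly N p lam mu j m) t * poly r t) = (\<lambda>t. (poly r t * krav N p m t
        - (lam * Phi1 N p lam mu j m) * (poly (kern_poly N p j m 0) t * poly r t))
        - (mu * Phi2 N p lam mu j m) * (poly (kern_poly N p j m (real N)) t * poly r t))"
    by (simp add: fun_eq_iff sob_poly_def algebra_simps)
  then have "wsum N p (\<lambda>t. poly (sob_poly N p lam mu j m) t * poly r t)
     = - lam * Phi1 N p lam mu j m * fdiffs j (poly r) 0 - mu * Phi2 N p lam mu j m * fdiffs j (poly r) (real N)"
    using assms
    by (simp add: wsum_diff wsum_cmult wsum_poly_times_krav [OF p_pos p_less_1]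
        wsum_kern_poly_times [OF p_pos p_less_1])
  then show ?thesis
    unfolding sip_eq_wsum fdiffs_sob_poly_boundary [OF assms(1)] by simp
qed

lemma SobK_eq_sob_poly:
  assumes "1 \<le> m" "m \<le> N"
  shows "SobK N p lam mu j m = sob_poly N p lam mu j m"
  unfolding SobK_def
proof (rule the_equality)
  show "degree (sob_poly N p lam mu j m) = m \<and> lead_coeff (sob_poly N p lam mu j m) = 1 \<and>
      (\<forall>r. degree r < m \<longrightarrow> sip N p lam mu j (sob_poly N p lam mu j m) r = 0)"
    using degree_sob_poly [OF assms(1)] sob_poly_orthogonal [OF assms(2)] by simp
next
  fix q
  assume q: "degree q = m \<and> lead_coeff q = 1 \<and> (\<forall>r. degree r < m \<longrightarrow> sip N p lam mu j q r = 0)"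
  define e where "e = q - sob_poly N p lam mu j m"
  have "degree e \<le> m" "coeff e m = 0"
    unfolding e_def using q degree_sob_poly [OF assms(1)] by (auto intro: degree_diff_le)
  then have "degree e < m \<or> e = 0"
    by (metis le_neq_implies_less leading_coeff_0_iff)
  moreover have "degree e < m \<Longrightarrow> e = 0"
  proof -
    assume e_degree: "degree e < m"
    have "sip N p lam mu j e e = 0"
      using q e_degree sob_poly_orthogonal [OF assms(2) e_degree] unfolding e_def sip_diff_left by simp
    then have "poly e (real x) = 0" if "x \<le> N" for x
      using sip_self_eq_0_imp [OF p_pos p_less_1 lam_pos mu_pos _ that] by blast
    then show "e = 0"
      using e_degree assms(2) by (intro poly_eq_0_if_vanishes_on_nodes [of N]) auto
  qed
  ultimately show "q = sob_poly N p lam mu j m"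
    unfolding e_def by auto
qed

lemma SobK_connection:
  assumes "1 \<le> m" "m \<le> N" "x \<notin> \<int>"
  shows "poly (SobK N p lam mu j m) x = C1 N p lam mu j m x * Kraw N p m x + D1 N p lam mu j m x * Kraw N p (m - 1) x"
  using assms
  by (simp add: SobK_eq_sob_poly sob_poly_def C1_def D1_def Kraw_eq [OF p_pos p_less_1]
      kern_poly_connection [OF p_pos p_less_1, where y = 0, simplified] kern_poly_connection [OF p_pos p_less_1]
      algebra_simps)

end

section \<open>Ladder relations\<close>

lemma eliminate_by_three_term:
  fixes x E F K K1 K2 a b :: real
  assumes "x * K1 = K + a * K1 + b * K2" "b \<noteq> 0"
  shows "E * K1 + F * K2 = (- F / b) * K + (E + (- F / b) * (a - x)) * K1"
proof -
  have K2: "K2 = ((x - a) * K1 - K) / b"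
    using assms by (simp add: field_simps)
  show ?thesis
    unfolding K2 using assms(2) by (simp add: field_simps)
qed

lemma x_bdiff_connection_identity:
  fixes x c c' d d' K K1 K2 K' K1' m N p a b :: real
  assumes "x * (K - K') = m * K + m * p * (N - m + 1) * K1"
    and "x * (K1 - K1') = (m - 1) * K1 + (m - 1) * p * (N - (m - 1) + 1) * K2"
    and "x * K1 = K + a * K1 + b * K2" "b \<noteq> 0"
  shows "x * ((c * K + d * K1) - (c' * K' + d' * K1'))
    = (x * (c - c') + m * c' - (m - 1) * p * (N - m + 2) * d' / b) * K
      + (x * (d - d') + m * p * (N - m + 1) * c' + (m - 1) * p * (N - m + 2) * (x - a) * d' / b + (m - 1) * d') * K1"
proof -
  define z where "z = (m - 1) * p * (N - m + 2) * d'"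
  define A where "A = x * (c - c') + m * c'"
  define E where "E = x * (d - d') + m * p * (N - m + 1) * c' + (m - 1) * d'"
  have "x * ((c * K + d * K1) - (c' * K' + d' * K1'))
      = x * (c - c') * K + x * (d - d') * K1 + c' * (x * (K - K')) + d' * (x * (K1 - K1'))"
    by (simp add: algebra_simps)
  also have "\<dots> = A * K + (E * K1 + z * K2)"
    unfolding assms(1,2) A_def E_def z_def by (simp add: algebra_simps)
  also have "\<dots> = A * K + ((- z / b) * K + (E + (- z / b) * (a - x)) * K1)"
    by (simp only: eliminate_by_three_term [OF assms(3,4)])
  also have "\<dots> = (A - z / b) * K + (E + z * (x - a) / b) * K1"
    using assms(4) by (simp add: field_simps)
  finally show ?thesis
    unfolding A_def E_def z_def by (simp add: algebra_simps)
qed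

lemma SobK_ladder:
  assumes "0 < p" "p < 1" "lam > 0" "mu > 0" "2 \<le> m" "m \<le> N" "x \<notin> \<int>"
  shows "x * bdiff (poly (SobK N p lam mu j m)) x
     = E1 N p lam mu j m x * Kraw N p m x + F1 N p lam mu j m x * Kraw N p (m - 1) x"
proof -
  have "x - 1 \<notin> \<int>"
    using assms(7) by (metis Ints_1 Ints_add diff_add_cancel)
  then have at_x: "poly (SobK N p lam mu j m) x = C1 N p lam mu j m x * krav N p m x + D1 N p lam mu j m x * krav N p (m - 1) x"
    and at_x1: "poly (SobK N p lam mu j m) (x - 1)
      = C1 N p lam mu j m (x - 1) * krav N p m (x - 1) + D1 N p lam mu j m (x - 1) * krav N p (m - 1) (x - 1)"
    using SobK_connection [OF assms(1-4), of m] assms(5-7) Kraw_eq [OF assms(1,2)] by auto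
  have "x * (krav N p m x - krav N p m (x - 1))
      = real m * krav N p m x + real m * p * (real N - real m + 1) * krav N p (m - 1) x"
    using krav_structure_relation [of m x] assms(5) by simp
  moreover have "x * (krav N p (m - 1) x - krav N p (m - 1) (x - 1)) = (real m - 1) * krav N p (m - 1) x
      + (real m - 1) * p * (real N - (real m - 1) + 1) * krav N p (m - 2) x"
    using krav_structure_relation [of "m - 1" x N p] assms(5) by (simp add: of_nat_diff numeral_2_eq_2)
  moreover have "x * krav N p (m - 1) x
      = krav N p m x + alphaK N p (m - 1) * krav N p (m - 1) x + betaK N p (m - 1) * krav N p (m - 2) x"
    using krav_three_term [of x N p "m - 1"] assms(5) by (simp add: numeral_2_eq_2)
  moreover have "betaK N p (m - 1) \<noteq> 0"
    using assms by (simp add: betaK_def of_nat_diff)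
  moreover have "Kraw N p m = krav N p m" "Kraw N p (m - 1) = krav N p (m - 1)"
    using Kraw_eq [OF assms(1,2)] assms(6) by simp_all
  ultimately show ?thesis
    unfolding bdiff_def at_x at_x1 E1_def F1_def
    by (simp only:) (rule x_bdiff_connection_identity)
qed

theorem mainTheorem5:
  fixes N j n :: nat and p lam mu :: real
  assumes "0 < p" "p < 1" "lam > 0" "mu > 0" "3 \<le> n" "n \<le> N"
  shows "\<forall>x::real. x \<notin> \<int> \<longrightarrow>
    x * bdiff (poly (SobK N p lam mu j n)) x
      = E1 N p lam mu j n x * Kraw N p n x + F1 N p lam mu j n x * Kraw N p (n - 1) x
    \<and> x * bdiff (poly (SobK N p lam mu j (n - 1))) x
      = E2 N p lam mu j n x * Kraw N p n x + F2 N p lam mu j n x * Kraw N p (n - 1) x"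
proof (intro allI impI conjI)
  fix x :: real
  assume x: "x \<notin> \<int>"
  show "x * bdiff (poly (SobK N p lam mu j n)) x
      = E1 N p lam mu j n x * Kraw N p n x + F1 N p lam mu j n x * Kraw N p (n - 1) x"
    using SobK_ladder [OF assms(1-4) _ assms(6) x] assms(5) by simp
  have lower: "x * bdiff (poly (SobK N p lam mu j (n - 1))) x
      = E1 N p lam mu j (n - 1) x * Kraw N p (n - 1) x + F1 N p lam mu j (n - 1) x * Kraw N p (n - 1 - 1) x"
    using SobK_ladder [OF assms(1-4) _ _ x, of "n - 1"] assms(5,6) by simp
  have recurrence: "x * Kraw N p (n - 1) x
      = Kraw N p n x + alphaK N p (n - 1) * Kraw N p (n - 1) x + betaK N p (n - 1) * Kraw N p (n - 1 - 1) x"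
    using krav_three_term [of x N p "n - 1"] Kraw_eq [OF assms(1,2)] assms(5,6) by simp
  have "betaK N p (n - 1) \<noteq> 0"
    using assms by (simp add: betaK_def of_nat_diff)
  then show "x * bdiff (poly (SobK N p lam mu j (n - 1))) x
      = E2 N p lam mu j n x * Kraw N p n x + F2 N p lam mu j n x * Kraw N p (n - 1) x"
    unfolding lower E2_def F2_def by (rule eliminate_by_three_term [OF recurrence])
qed

end
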